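(* Let $\mathbb{K}$ be a field of characteristic zero, let $p,q\in\mathbb{Z}^n_{\ge0}$ be nonzero vectors and let $\beta,\gamma\in\mathbb{K}^n$ be non-proportional vectors. If the derivations $\Delta^p_\beta$ and $\Delta^q_\gamma$ of $\mathbb{K}[x_1,\ldots,x_n]$ generate a finite dimensional Lie algebra, then there exists $r\in\mathbb{Z}_{\ge0}$ such that $\langle\beta,rp+q\rangle=0$.
   Context: For $p\in\mathbb{Z}^n_{\ge0}$ and $\beta\in\mathbb{K}^n$, $\Delta^p_\beta:=x_1^{p_1}\cdots x_n^{p_n}\sum_{j=1}^n\beta_jx_j\partial_j$, where $\partial_j=\partial/\partial x_j$. $\langle\beta,u\rangle:=\sum_i\beta_iu_i$. The Lie bracket is the commutator of derivations. *)

theory Defs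
  imports Main "HOL-Library.Poly_Mapping"
begin

text \<open>Polynomial ring K[x_j : j in 'n], with 'n a finite index type (n = CARD('n)).
Monomials are finitely supported exponent vectors, polynomials are finitely supported
coefficient maps (convolution product from HOL-Library.Poly_Mapping).\<close>

type_synonym ('n, 'a) mpoly = "('n \<Rightarrow>\<^sub>0 nat) \<Rightarrow>\<^sub>0 'a"

definition pconst :: "'a::zero \<Rightarrow> ('n, 'a) mpoly" where
  "pconst c = Poly_Mapping.single 0 c"

definition pvar :: "'n \<Rightarrow> ('n, 'a::{zero,one}) mpoly" where
  "pvar j = Poly_Mapping.single (Poly_Mapping.single j 1) 1"

definition pmonom :: "('n \<Rightarrow>\<^sub>0 nat) \<Rightarrow> ('n, 'a::{zero,one}) mpoly" where
  "pmonom u = Poly_Mapping.single u 1"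

definition psmult :: "'a::semiring_0 \<Rightarrow> ('n, 'a) mpoly \<Rightarrow> ('n, 'a) mpoly" where
  "psmult c f = Poly_Mapping.map (\<lambda>a. c * a) f"

definition pderiv_var :: "'n \<Rightarrow> ('n, 'a::comm_semiring_1) mpoly \<Rightarrow> ('n, 'a) mpoly" where
  "pderiv_var j f = (\<Sum>u\<in>Poly_Mapping.keys f.
      Poly_Mapping.single (u - Poly_Mapping.single j (1::nat))
        (of_nat (Poly_Mapping.lookup u j) * Poly_Mapping.lookup f u))"

definition Delta :: "('n::finite \<Rightarrow>\<^sub>0 nat) \<Rightarrow> ('n \<Rightarrow> 'a::comm_semiring_1)
    \<Rightarrow> ('n, 'a) mpoly \<Rightarrow> ('n, 'a) mpoly" where
  "Delta p \<beta> f = pmonom p * (\<Sum>j\<in>UNIV. psmult (\<beta> j) (pvar j * pderiv_var j f))"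

definition lie_bracket :: "('b \<Rightarrow> 'b::ab_group_add) \<Rightarrow> ('b \<Rightarrow> 'b) \<Rightarrow> 'b \<Rightarrow> 'b" where
  "lie_bracket D E = (\<lambda>f. D (E f) - E (D f))"

inductive_set lie_gen :: "(('n, 'a::field) mpoly \<Rightarrow> ('n, 'a) mpoly) set
    \<Rightarrow> (('n, 'a) mpoly \<Rightarrow> ('n, 'a) mpoly) set" for G where
  gen: "D \<in> G \<Longrightarrow> D \<in> lie_gen G"
| zero: "(\<lambda>f. 0) \<in> lie_gen G"
| add: "D \<in> lie_gen G \<Longrightarrow> E \<in> lie_gen G \<Longrightarrow> (\<lambda>f. D f + E f) \<in> lie_gen G"
| smult: "D \<in> lie_gen G \<Longrightarrow> (\<lambda>f. psmult c (D f)) \<in> lie_gen G"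
| bracket: "D \<in> lie_gen G \<Longrightarrow> E \<in> lie_gen G \<Longrightarrow> lie_bracket D E \<in> lie_gen G"

definition fin_dim_ops :: "(('n, 'a::field) mpoly \<Rightarrow> ('n, 'a) mpoly) set \<Rightarrow> bool" where
  "fin_dim_ops L \<longleftrightarrow> (\<exists>B. finite B \<and>
     (\<forall>D\<in>L. \<exists>c. D = (\<lambda>f. \<Sum>b\<in>B. psmult (c b) (b f))))"

end

theory Submission
  imports Defs
begin

text \<open>Both generators act on monomials by x^u \<mapsto> \<langle>\<beta>,u\<rangle> x^(p+u), and so does their commutator:
[\<Delta>^p_\<beta>, \<Delta>^w_\<delta>] = \<Delta>^(p+w)_(\<langle>\<beta>,w\<rangle>\<delta> - \<langle>\<delta>,p\<rangle>\<beta>) on monomials. Hence ad(\<Delta>^p_\<beta>)^k \<Delta>^q_\<gamma> acts as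
\<Delta>^(kp+q)_(\<delta>_k) with \<delta>_0 = \<gamma> and \<delta>_(k+1) = \<langle>\<beta>,kp+q\<rangle>\<delta>_k - \<langle>\<delta>_k,p\<rangle>\<beta>. If \<langle>\<beta>,kp+q\<rangle> never
vanishes, then \<delta>_k = a\<gamma> + b\<beta> with a \<noteq> 0, so \<delta>_k \<noteq> 0 by non-proportionality and the k-th
operator sends some variable x_j to a nonzero multiple of x_j x^(kp+q). A finite dimensional
space of operators produces only finitely many monomials from the finitely many variables,
whereas the exponents kp+q are pairwise distinct because p \<noteq> 0.\<close>

definition pairing :: "('n::finite \<Rightarrow> 'a::comm_semiring_1) \<Rightarrow> ('n \<Rightarrow>\<^sub>0 nat) \<Rightarrow> 'a" where
  "pairing v u = (\<Sum>j\<in>UNIV. v j * of_nat (Poly_Mapping.lookup u j))"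

lemma pairing_add: "pairing v (a + b) = pairing v a + pairing v b"
  by (simp add: pairing_def lookup_add distrib_left sum.distrib)

lemma pairing_single_1: "pairing v (Poly_Mapping.single j 1) = v j"
proof -
  have "pairing v (Poly_Mapping.single j 1) = (\<Sum>i\<in>UNIV. if i = j then v j else 0)"
    unfolding pairing_def by (rule sum.cong) (auto simp: lookup_single when_def)
  then show ?thesis by simp
qed

lemma pairing_diff_scaled:
  fixes v w :: "'n::finite \<Rightarrow> 'a::comm_ring_1"
  shows "pairing (\<lambda>j. a * v j - b * w j) u = a * pairing v u - b * pairing w u"
  by (simp add: pairing_def sum_subtractf sum_distrib_left left_diff_distrib mult.assoc)

definition exp_line :: "('n::finite \<Rightarrow>\<^sub>0 nat) \<Rightarrow> ('n \<Rightarrow>\<^sub>0 nat) \<Rightarrow> nat \<Rightarrow> ('n \<Rightarrow>\<^sub>0 nat)" where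
  "exp_line p q k = Abs_poly_mapping (\<lambda>j. k * Poly_Mapping.lookup p j + Poly_Mapping.lookup q j)"

lemma lookup_exp_line [simp]:
  "Poly_Mapping.lookup (exp_line p q k) j = k * Poly_Mapping.lookup p j + Poly_Mapping.lookup q j"
  by (simp add: exp_line_def)

lemma exp_line_0: "exp_line p q 0 = q"
  by (rule poly_mapping_eqI) simp

lemma exp_line_Suc: "exp_line p q (Suc k) = p + exp_line p q k"
  by (rule poly_mapping_eqI) (simp add: lookup_add)

lemma inj_exp_line:
  assumes "p \<noteq> 0"
  shows "inj (exp_line p q)"
proof (rule injI)
  fix k l
  assume "exp_line p q k = exp_line p q l"
  moreover obtain j where "Poly_Mapping.lookup p j \<noteq> 0"
    using assms by (metis poly_mapping_eqI lookup_zero)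
  ultimately show "k = l"
    by (metis lookup_exp_line add_right_cancel mult_right_cancel)
qed

lemma single_sum: "(\<Sum>j\<in>A. Poly_Mapping.single u (f j)) = Poly_Mapping.single u (sum f A)"
  by (rule poly_mapping_eqI) (simp add: lookup_sum lookup_single when_def)

lemma pvar_mult_pderiv_var_single:
  "pvar j * pderiv_var j (Poly_Mapping.single u c) =
     Poly_Mapping.single u (of_nat (Poly_Mapping.lookup u j) * (c::'a::comm_semiring_1))"
proof (cases "c = 0")
  case True
  then show ?thesis by (simp add: pderiv_var_def)
next
  case False
  then have shifted: "pvar j * pderiv_var j (Poly_Mapping.single u c) =
      Poly_Mapping.single (Poly_Mapping.single j 1 + (u - Poly_Mapping.single j 1))
        (of_nat (Poly_Mapping.lookup u j) * c)"
    by (simp add: pderiv_var_def pvar_def mult_single)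
  show ?thesis
  proof (cases "Poly_Mapping.lookup u j = 0")
    case True
    then show ?thesis using shifted by simp
  next
    case False
    then have "Poly_Mapping.single j 1 + (u - Poly_Mapping.single j 1) = u"
      by (intro poly_mapping_eqI) (auto simp: lookup_add lookup_minus lookup_single when_def)
    then show ?thesis using shifted by simp
  qed
qed

lemma Delta_single:
  "Delta p \<beta> (Poly_Mapping.single u c) = Poly_Mapping.single (p + u) (pairing \<beta> u * c)"
proof -
  have "(\<Sum>j\<in>UNIV. psmult (\<beta> j) (pvar j * pderiv_var j (Poly_Mapping.single u c)))
      = (\<Sum>j\<in>UNIV. Poly_Mapping.single u (\<beta> j * (of_nat (Poly_Mapping.lookup u j) * c)))"
    by (simp add: pvar_mult_pderiv_var_single psmult_def)
  also have "\<dots> = Poly_Mapping.single u (pairing \<beta> u * c)"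
    by (simp add: single_sum pairing_def sum_distrib_right mult.assoc)
  finally show ?thesis
    by (simp add: Delta_def pmonom_def mult_single)
qed

definition ad_coeff :: "('n::finite \<Rightarrow>\<^sub>0 nat) \<Rightarrow> ('n \<Rightarrow> 'a::comm_ring_1) \<Rightarrow> ('n \<Rightarrow>\<^sub>0 nat)
    \<Rightarrow> ('n \<Rightarrow> 'a) \<Rightarrow> 'n \<Rightarrow> 'a" where
  "ad_coeff p \<beta> w \<delta> = (\<lambda>j. pairing \<beta> w * \<delta> j - pairing \<delta> p * \<beta> j)"

lemma pairing_ad_coeff:
  "pairing (ad_coeff p \<beta> w \<delta>) u = pairing \<beta> w * pairing \<delta> u - pairing \<delta> p * pairing \<beta> u"
  by (simp add: ad_coeff_def pairing_diff_scaled)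

lemma lie_bracket_Delta_single:
  assumes "\<And>u c. E (Poly_Mapping.single u c) = Delta w \<delta> (Poly_Mapping.single u c)"
  shows "lie_bracket (Delta p \<beta>) E (Poly_Mapping.single u c)
    = Delta (p + w) (ad_coeff p \<beta> w \<delta>) (Poly_Mapping.single u c)"
proof -
  have "lie_bracket (Delta p \<beta>) E (Poly_Mapping.single u c)
      = Poly_Mapping.single (p + w + u)
          (pairing \<beta> (w + u) * (pairing \<delta> u * c) - pairing \<delta> (p + u) * (pairing \<beta> u * c))"
    by (simp add: lie_bracket_def assms Delta_single single_diff add.left_commute add.assoc)
  also have "pairing \<beta> (w + u) * (pairing \<delta> u * c) - pairing \<delta> (p + u) * (pairing \<beta> u * c)
      = pairing (ad_coeff p \<beta> w \<delta>) u * c"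
    by (simp add: pairing_ad_coeff pairing_add algebra_simps)
  finally show ?thesis
    by (simp add: Delta_single)
qed

primrec ad_coeffs :: "('n::finite \<Rightarrow>\<^sub>0 nat) \<Rightarrow> ('n \<Rightarrow> 'a::comm_ring_1) \<Rightarrow> ('n \<Rightarrow>\<^sub>0 nat)
    \<Rightarrow> ('n \<Rightarrow> 'a) \<Rightarrow> nat \<Rightarrow> 'n \<Rightarrow> 'a" where
  "ad_coeffs p \<beta> q \<gamma> 0 = \<gamma>"
| "ad_coeffs p \<beta> q \<gamma> (Suc k) = ad_coeff p \<beta> (exp_line p q k) (ad_coeffs p \<beta> q \<gamma> k)"

lemma ad_power_Delta_single:
  "(lie_bracket (Delta p \<beta>) ^^ k) (Delta q \<gamma>) (Poly_Mapping.single u c)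
    = Delta (exp_line p q k) (ad_coeffs p \<beta> q \<gamma> k) (Poly_Mapping.single u c)"
proof (induction k arbitrary: u c)
  case 0
  then show ?case by (simp add: exp_line_0)
next
  case (Suc k)
  then show ?case by (simp add: lie_bracket_Delta_single exp_line_Suc)
qed

lemma ad_power_Delta_pvar:
  "(lie_bracket (Delta p \<beta>) ^^ k) (Delta q \<gamma>) (pvar j)
    = Poly_Mapping.single (exp_line p q k + Poly_Mapping.single j 1) (ad_coeffs p \<beta> q \<gamma> k j)"
  by (simp only: pvar_def ad_power_Delta_single Delta_single pairing_single_1 mult_1_right)

lemma ad_power_in_lie_gen:
  "(lie_bracket (Delta p \<beta>) ^^ k) (Delta q \<gamma>) \<in> lie_gen {Delta p \<beta>, Delta q \<gamma>}"
  by (induction k) (auto intro: lie_gen.intros)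

lemma ad_coeffs_span:
  fixes \<beta> \<gamma> :: "'n::finite \<Rightarrow> 'a::idom"
  assumes "\<And>i. i < k \<Longrightarrow> pairing \<beta> (exp_line p q i) \<noteq> 0"
  shows "\<exists>a b. a \<noteq> 0 \<and> ad_coeffs p \<beta> q \<gamma> k = (\<lambda>j. a * \<gamma> j + b * \<beta> j)"
  using assms
proof (induction k)
  case 0
  show ?case by (intro exI[of _ 1] exI[of _ 0]) simp
next
  case (Suc k)
  then obtain a b where "a \<noteq> 0" and ab: "ad_coeffs p \<beta> q \<gamma> k = (\<lambda>j. a * \<gamma> j + b * \<beta> j)"
    by auto
  let ?s = "pairing \<beta> (exp_line p q k)"
  have "ad_coeffs p \<beta> q \<gamma> (Suc k)
      = (\<lambda>j. (?s * a) * \<gamma> j + (?s * b - pairing (ad_coeffs p \<beta> q \<gamma> k) p) * \<beta> j)"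
    by (simp add: ad_coeff_def ab algebra_simps)
  moreover have "?s * a \<noteq> 0"
    using \<open>a \<noteq> 0\<close> Suc.prems by simp
  ultimately show ?case by blast
qed

lemma keys_psmult_subset: "Poly_Mapping.keys (psmult c f) \<subseteq> Poly_Mapping.keys f"
  by (auto simp: psmult_def in_keys_iff map.rep_eq)

lemma fin_dim_ops_finite_keys:
  assumes "fin_dim_ops L" and "finite F"
  shows "finite (\<Union>D\<in>L. \<Union>f\<in>F. Poly_Mapping.keys (D f))"
proof -
  obtain B where "finite B"
    and B: "\<And>D. D \<in> L \<Longrightarrow> \<exists>c. D = (\<lambda>f. \<Sum>b\<in>B. psmult (c b) (b f))"
    using assms(1) unfolding fin_dim_ops_def by blast
  have "Poly_Mapping.keys (D f) \<subseteq> (\<Union>b\<in>B. Poly_Mapping.keys (b f))" if "D \<in> L" for D f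
    using B[OF that] keys_sum keys_psmult_subset by fastforce
  then have "(\<Union>D\<in>L. \<Union>f\<in>F. Poly_Mapping.keys (D f)) \<subseteq> (\<Union>b\<in>B. \<Union>f\<in>F. Poly_Mapping.keys (b f))"
    by blast
  then show ?thesis
    using \<open>finite B\<close> \<open>finite F\<close> finite_subset by fastforce
qed

theorem lemma5:
  fixes p q :: "'n::finite \<Rightarrow>\<^sub>0 nat" and \<beta> \<gamma> :: "'n \<Rightarrow> 'a::field_char_0"
  assumes "p \<noteq> 0" and "q \<noteq> 0"
    and nonprop: "\<forall>a b. (\<forall>j. a * \<beta> j + b * \<gamma> j = 0) \<longrightarrow> a = 0 \<and> b = 0"
    and "fin_dim_ops (lie_gen {Delta p \<beta>, Delta q \<gamma>})"
  shows "\<exists>r::nat. (\<Sum>j\<in>UNIV. \<beta> j * of_nat (r * Poly_Mapping.lookup p j + Poly_Mapping.lookup q j)) = 0"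
proof (rule ccontr)
  assume "\<not> ?thesis"
  then have nonzero: "pairing \<beta> (exp_line p q k) \<noteq> 0" for k
    by (simp add: pairing_def)
  define K where "K = (\<Union>D\<in>lie_gen {Delta p \<beta>, Delta q \<gamma>}. \<Union>f\<in>range pvar. Poly_Mapping.keys (D f))"
  have "exp_line p q k \<in> (\<lambda>(s, j). s - Poly_Mapping.single j 1) ` (K \<times> UNIV)" for k
  proof -
    obtain a b where "a \<noteq> 0" and "ad_coeffs p \<beta> q \<gamma> k = (\<lambda>j. a * \<gamma> j + b * \<beta> j)"
      using ad_coeffs_span nonzero by blast
    then obtain j where "ad_coeffs p \<beta> q \<gamma> k j \<noteq> 0"
      using nonprop by (metis add.commute)
    then have "exp_line p q k + Poly_Mapping.single j 1
        \<in> Poly_Mapping.keys ((lie_bracket (Delta p \<beta>) ^^ k) (Delta q \<gamma>) (pvar j))"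
      by (simp add: ad_power_Delta_pvar)
    then have "exp_line p q k + Poly_Mapping.single j 1 \<in> K"
      unfolding K_def using ad_power_in_lie_gen by blast
    then show ?thesis
      by (intro image_eqI[where x = "(exp_line p q k + Poly_Mapping.single j 1, j)"]) simp_all
  qed
  then have "range (exp_line p q) \<subseteq> (\<lambda>(s, j). s - Poly_Mapping.single j 1) ` (K \<times> UNIV)"
    by blast
  moreover have "finite K"
    unfolding K_def using assms(4) by (rule fin_dim_ops_finite_keys) simp
  ultimately have "finite (range (exp_line p q))"
    by (simp add: finite_subset)
  then show False
    using inj_exp_line[OF \<open>p \<noteq> 0\<close>] finite_imageD by fastforce
qed

end
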